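(* In every strategic game (in the setting described in the context, with equivalent priors) with imperfect information, Assumption BAY is violated.
   Context: Setting: there are $n\ge 2$ players and a measurable space $(\Omega,\mathcal{F})$. Each player $i$ has a prior $p_i$ on $\mathcal{F}$, an action set $A_i\subseteq\mathbb{R}$ with $|A_i|>1$, and a finite private information partition $\mathcal{I}_i$ of $\Omega$ into nonempty measurable events; the coarsest common refinement of the $\mathcal{I}_i$ is measurable. The priors are equivalent: $p_i(F)=0$ iff $p_j(F)=0$ for all $F\in\mathcal{F}$, $i,j$. Events of positive probability are called substantial, those of probability zero null. A strategy of player $i$ is a $\sigma(\mathcal{I}_i)$-measurable function $s_i:\Omega\to A_i$, and each player may choose any such function. Let $s^i$ be the tuple of the actual strategies of the other players. For each substantial $I_i\in\mathcal{I}_i$ and action $a_i\in A_i$ chosen on $I_i$, player $i$ has a conjecture $\psi_i(I_i,a_i)$ about the other players' strategies, unique up to $p_i(\cdot\mid I_i)$-null events. Player $i$ has imperfect information if there exist a substantial $I_i\in\mathcal{I}_i$, a player $j\neq i$ and $I_j\in\mathcal{I}_j$ with $0<p_i(I_j\mid I_i)<1$; the game has imperfect information if some player does. Assumption BAY: for every player $i$, each substantial $I_i\in\mathcal{I}_i$ and each $a_i\in A_i$, $\psi_i(I_i,a_i)=s^i$ except on $p_i(\cdot\mid I_i)$-null events, where $s^i$ is the true response of the others; i.e., each player's action on a substantial information cell uniquely and correctly determines the other players' strategies up to null events. *)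

theory Defs
  imports "HOL-Probability.Probability"
begin

text \<open>Players are the indices 0..<n. The measurable space is given by a measure M
  (only its sets and space are used). Priors are p i, information partitions P i,
  action sets A i.\<close>

definition fin_partition :: "'a measure \<Rightarrow> 'a set set \<Rightarrow> bool" where
  "fin_partition M Q \<longleftrightarrow> finite Q \<and> (\<forall>I\<in>Q. I \<noteq> {} \<and> I \<in> sets M)
      \<and> \<Union>Q = space M \<and> disjoint Q"

definition is_strategy :: "'a measure \<Rightarrow> 'a set set \<Rightarrow> real set \<Rightarrow> ('a \<Rightarrow> real) \<Rightarrow> bool" where
  "is_strategy M Q A s \<longleftrightarrow> s \<in> measurable (sigma (space M) Q) borel \<and> (\<forall>\<omega>\<in>space M. s \<omega> \<in> A)"

definition game :: "nat \<Rightarrow> 'a measure \<Rightarrow> (nat \<Rightarrow> 'a measure) \<Rightarrow> (nat \<Rightarrow> real set)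
     \<Rightarrow> (nat \<Rightarrow> 'a set set) \<Rightarrow> bool" where
  "game n M p A P \<longleftrightarrow> n \<ge> 2
     \<and> (\<forall>i<n. prob_space (p i) \<and> sets (p i) = sets M)
     \<and> (\<forall>i<n. \<exists>x\<in>A i. \<exists>y\<in>A i. x \<noteq> y)
     \<and> (\<forall>i<n. fin_partition M (P i))
     \<and> (\<forall>f. (\<forall>i<n. f i \<in> P i) \<longrightarrow> (\<Inter>i\<in>{..<n}. f i) \<in> sets M)
     \<and> (\<forall>F\<in>sets M. \<forall>i<n. \<forall>j<n. measure (p i) F = 0 \<longleftrightarrow> measure (p j) F = 0)"

definition cond_prob :: "'a measure \<Rightarrow> 'a set \<Rightarrow> 'a set \<Rightarrow> real" where
  "cond_prob q J I = measure q (J \<inter> I) / measure q I"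

definition imperfect_info_player :: "nat \<Rightarrow> (nat \<Rightarrow> 'a measure) \<Rightarrow> (nat \<Rightarrow> 'a set set) \<Rightarrow> nat \<Rightarrow> bool" where
  "imperfect_info_player n p P i \<longleftrightarrow>
     (\<exists>I\<in>P i. measure (p i) I > 0 \<and>
        (\<exists>j<n. j \<noteq> i \<and> (\<exists>J\<in>P j. 0 < cond_prob (p i) J I \<and> cond_prob (p i) J I < 1)))"

definition imperfect_info :: "nat \<Rightarrow> (nat \<Rightarrow> 'a measure) \<Rightarrow> (nat \<Rightarrow> 'a set set) \<Rightarrow> bool" where
  "imperfect_info n p P \<longleftrightarrow> (\<exists>i<n. imperfect_info_player n p P i)"

text \<open>Conjectures: psi i I a is the tuple (indexed by j) of strategies player i conjectures
  for the others when choosing action a on cell I.\<close>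
definition conjectures :: "nat \<Rightarrow> 'a measure \<Rightarrow> (nat \<Rightarrow> real set) \<Rightarrow> (nat \<Rightarrow> 'a set set)
     \<Rightarrow> (nat \<Rightarrow> 'a set \<Rightarrow> real \<Rightarrow> nat \<Rightarrow> 'a \<Rightarrow> real) \<Rightarrow> bool" where
  "conjectures n M A P \<psi> \<longleftrightarrow> (\<forall>i<n. \<forall>I\<in>P i. \<forall>a\<in>A i. \<forall>j<n. j \<noteq> i \<longrightarrow>
       is_strategy M (P j) (A j) (\<psi> i I a j))"

text \<open>W is the set of possible actual strategy profiles.\<close>
definition free_choice_worlds :: "nat \<Rightarrow> 'a measure \<Rightarrow> (nat \<Rightarrow> real set) \<Rightarrow> (nat \<Rightarrow> 'a set set)
     \<Rightarrow> (nat \<Rightarrow> 'a \<Rightarrow> real) set \<Rightarrow> bool" where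
  "free_choice_worlds n M A P W \<longleftrightarrow>
     (\<forall>s\<in>W. \<forall>i<n. is_strategy M (P i) (A i) (s i))
     \<and> (\<forall>i<n. \<forall>\<sigma>. is_strategy M (P i) (A i) \<sigma> \<longrightarrow> (\<exists>s\<in>W. \<forall>\<omega>\<in>space M. s i \<omega> = \<sigma> \<omega>))"

definition BAY :: "nat \<Rightarrow> (nat \<Rightarrow> 'a measure) \<Rightarrow> (nat \<Rightarrow> real set) \<Rightarrow> (nat \<Rightarrow> 'a set set)
     \<Rightarrow> (nat \<Rightarrow> 'a \<Rightarrow> real) set \<Rightarrow> (nat \<Rightarrow> 'a set \<Rightarrow> real \<Rightarrow> nat \<Rightarrow> 'a \<Rightarrow> real) \<Rightarrow> bool" where
  "BAY n p A P W \<psi> \<longleftrightarrow> (\<forall>s\<in>W. \<forall>i<n. \<forall>I\<in>P i. \<forall>a\<in>A i.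
       measure (p i) I > 0 \<and> (\<forall>\<omega>\<in>I. s i \<omega> = a) \<longrightarrow>
       (AE \<omega> in p i. \<omega> \<in> I \<longrightarrow> (\<forall>j<n. j \<noteq> i \<longrightarrow> \<psi> i I a j \<omega> = s j \<omega>)))"

end

theory Submission
  imports Defs
begin

text \<open>Suppose player i has a substantial cell I and player j a cell J with
  0 < p_i(J | I) < 1. Take two strategy profiles in which j plays the same action x on J
  but different actions off J. By BAY for j on J, the other players' strategies agree
  p_j-almost surely on J; as the priors are equivalent, J \<inter> I is p_j-substantial, so
  player i's strategies agree somewhere on I and hence, being constant on I, everywhere
  on I. Now BAY for i on I forces j's strategies to agree p_i-almost surely on I,
  although they differ on the p_i-substantial set I - J.\<close>

lemma sigma_sets_partition_cell_cases:
  assumes "X \<in> sigma_sets \<Omega> Q" "disjoint Q" "\<Union>Q = \<Omega>" "C \<in> Q"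
  shows "C \<subseteq> X \<or> C \<inter> X = {}"
  using assms(1)
proof (induction rule: sigma_sets.induct)
  case (Basic a)
  then show ?case using assms(2,4) by (metis disjointD inf.orderE order_refl)
next
  case (Compl a)
  then show ?case using assms(3,4) by blast
qed blast+

lemma strategy_constant_on_cell:
  assumes "fin_partition M Q" "is_strategy M Q A s" "I \<in> Q" "\<omega> \<in> I" "\<omega>' \<in> I"
  shows "s \<omega>' = s \<omega>"
proof -
  have Q: "Q \<subseteq> Pow (space M)" "disjoint Q" "\<Union>Q = space M"
    using assms(1) unfolding fin_partition_def by auto
  have "s \<in> measurable (sigma (space M) Q) borel"
    using assms(2) unfolding is_strategy_def by auto
  then have "s -` {s \<omega>} \<inter> space (sigma (space M) Q) \<in> sets (sigma (space M) Q)"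
    by (rule measurable_sets) simp
  then have "s -` {s \<omega>} \<inter> space M \<in> sigma_sets (space M) Q"
    using Q(1) by (simp add: sets_measure_of space_measure_of_conv)
  then have "I \<subseteq> s -` {s \<omega>} \<inter> space M \<or> I \<inter> (s -` {s \<omega>} \<inter> space M) = {}"
    using sigma_sets_partition_cell_cases Q(2,3) assms(3) by blast
  moreover have "\<omega> \<in> space M" using Q(1) assms(3,4) by blast
  ultimately show ?thesis using assms(4,5) by blast
qed

lemma is_strategy_cell_indicator:
  assumes "fin_partition M Q" "J \<in> Q" "x \<in> A" "y \<in> A"
  shows "is_strategy M Q A (\<lambda>\<omega>. if \<omega> \<in> J then x else y)"
proof -
  have "J \<in> sets (sigma (space M) Q)"
    using assms(1,2) unfolding fin_partition_def by (auto simp: sets_measure_of)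
  then have "{\<omega> \<in> space (sigma (space M) Q). \<omega> \<in> J} \<in> sets (sigma (space M) Q)"
    by (simp add: Int_absorb1 Int_def[symmetric] sets.sets_into_space)
  then have "(\<lambda>\<omega>. if \<omega> \<in> J then x else y) \<in> measurable (sigma (space M) Q) borel"
    by (intro measurable_If) auto
  then show ?thesis unfolding is_strategy_def using assms(3,4) by auto
qed

lemma AE_imp_ex_on_nonnull_subset:
  assumes "AE \<omega> in q. \<omega> \<in> Y \<longrightarrow> R \<omega>" "X \<subseteq> Y" "X \<in> sets q" "measure q X \<noteq> 0"
  shows "\<exists>\<omega>\<in>X. R \<omega>"
proof (rule ccontr)
  assume "\<not> (\<exists>\<omega>\<in>X. R \<omega>)"
  with assms(1,2) have "AE \<omega> in q. \<omega> \<notin> X" by (auto elim: AE_mp)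
  then have "X \<in> null_sets q" using AE_iff_null_sets assms(3) by blast
  then show False using assms(4) by (simp add: measure_def null_setsD1)
qed

lemma cond_prob_strictly_between_imp_pos:
  assumes "finite_measure q" "I \<in> sets q" "J \<in> sets q"
    and "0 < cond_prob q J I" "cond_prob q J I < 1"
  shows "measure q (J \<inter> I) > 0" "measure q (I - J) > 0"
proof -
  have "measure q I > 0"
    using assms(4) unfolding cond_prob_def by (metis div_by_0 less_irrefl measure_nonneg
        order_less_le)
  then show "measure q (J \<inter> I) > 0"
    using assms(4) unfolding cond_prob_def by (simp add: zero_less_divide_iff)
  have "measure q (I - J) = measure q I - measure q (J \<inter> I)"
    using finite_measure.finite_measure_Diff'[OF assms(1,2,3)] by (simp add: Int_commute)
  then show "measure q (I - J) > 0"
    using assms(5) \<open>measure q I > 0\<close> unfolding cond_prob_def by (simp add: field_simps)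
qed

lemma gameD:
  assumes "game n M p A P" "i < n"
  shows "prob_space (p i)" "sets (p i) = sets M" "fin_partition M (P i)"
    "\<exists>x\<in>A i. \<exists>y\<in>A i. x \<noteq> y"
  using assms unfolding game_def by blast+

lemma game_measure_pos_iff:
  assumes "game n M p A P" "F \<in> sets M" "i < n" "j < n"
  shows "measure (p i) F > 0 \<longleftrightarrow> measure (p j) F > 0"
proof -
  have "\<forall>F\<in>sets M. \<forall>i<n. \<forall>j<n. measure (p i) F = 0 \<longleftrightarrow> measure (p j) F = 0"
    using assms(1) unfolding game_def by (elim conjE)
  then have "measure (p i) F = 0 \<longleftrightarrow> measure (p j) F = 0" using assms(2-4) by blast
  then show ?thesis by (simp only: zero_less_measure_iff)
qed

lemma free_choice_worlds_deviation_off_cell: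
  assumes "free_choice_worlds n M A P W" "fin_partition M (P j)" "j < n" "J \<in> P j"
    and "x \<in> A j" "y \<in> A j"
  obtains s t where "s \<in> W" "t \<in> W" "\<forall>\<omega>\<in>space M. s j \<omega> = x"
    "\<forall>\<omega>\<in>space M. t j \<omega> = (if \<omega> \<in> J then x else y)"
proof -
  have free: "\<And>\<sigma>. is_strategy M (P j) (A j) \<sigma> \<Longrightarrow> \<exists>s\<in>W. \<forall>\<omega>\<in>space M. s j \<omega> = \<sigma> \<omega>"
    using assms(1,3) unfolding free_choice_worlds_def by blast
  obtain s where "s \<in> W" "\<forall>\<omega>\<in>space M. s j \<omega> = (if \<omega> \<in> J then x else x)"
    using free is_strategy_cell_indicator assms(2,4,5) by blast
  moreover obtain t where "t \<in> W" "\<forall>\<omega>\<in>space M. t j \<omega> = (if \<omega> \<in> J then x else y)"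
    using free is_strategy_cell_indicator assms(2,4,5,6) by blast
  ultimately show thesis using that by simp
qed

lemma BAY_same_action_imp_AE_eq:
  assumes "BAY n p A P W \<psi>" "s \<in> W" "t \<in> W" "i < n" "I \<in> P i" "a \<in> A i"
    and "measure (p i) I > 0" "\<forall>\<omega>\<in>I. s i \<omega> = a" "\<forall>\<omega>\<in>I. t i \<omega> = a" "k < n" "k \<noteq> i"
  shows "AE \<omega> in p i. \<omega> \<in> I \<longrightarrow> s k \<omega> = t k \<omega>"
proof -
  have "AE \<omega> in p i. \<omega> \<in> I \<longrightarrow> (\<forall>k<n. k \<noteq> i \<longrightarrow> \<psi> i I a k \<omega> = s k \<omega>)"
    "AE \<omega> in p i. \<omega> \<in> I \<longrightarrow> (\<forall>k<n. k \<noteq> i \<longrightarrow> \<psi> i I a k \<omega> = t k \<omega>)"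
    using assms(1-9) unfolding BAY_def by blast+
  then show ?thesis by eventually_elim (use assms(10,11) in auto)
qed

lemma BAY_imp_same_action_on_overlapping_cell:
  assumes game: "game n M p A P" and worlds: "free_choice_worlds n M A P W"
    and bay: "BAY n p A P W \<psi>" and st: "s \<in> W" "t \<in> W"
    and j: "j < n" "J \<in> P j" "x \<in> A j"
    and same_j: "\<forall>\<omega>\<in>J. s j \<omega> = x" "\<forall>\<omega>\<in>J. t j \<omega> = x"
    and i: "i < n" "i \<noteq> j" "I \<in> P i" "measure (p j) (J \<inter> I) > 0"
  shows "\<exists>a\<in>A i. (\<forall>\<omega>\<in>I. s i \<omega> = a) \<and> (\<forall>\<omega>\<in>I. t i \<omega> = a)"
proof -
  have partition: "fin_partition M (P i)" "fin_partition M (P j)"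
    and prob_j: "finite_measure (p j)" "sets (p j) = sets M"
    using gameD[OF game] i(1) j(1) by (auto intro: prob_space.finite_measure)
  have "I \<subseteq> space M" "J \<in> sets (p j)" "J \<inter> I \<in> sets (p j)"
    using partition i(3) j(2) prob_j(2) unfolding fin_partition_def by auto
  then have "measure (p j) (J \<inter> I) \<le> measure (p j) J"
    using finite_measure.finite_measure_mono[OF prob_j(1)] by simp
  then have "measure (p j) J > 0" using i(4) by linarith
  then have "AE \<omega> in p j. \<omega> \<in> J \<longrightarrow> s i \<omega> = t i \<omega>"
    by (rule BAY_same_action_imp_AE_eq[OF bay st j _ same_j i(1,2)])
  from AE_imp_ex_on_nonnull_subset[OF this Int_lower1 \<open>J \<inter> I \<in> sets (p j)\<close>] i(4)
  obtain \<omega>\<^sub>0 where \<omega>\<^sub>0: "\<omega>\<^sub>0 \<in> J \<inter> I" "s i \<omega>\<^sub>0 = t i \<omega>\<^sub>0" by auto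
  have strategies: "is_strategy M (P i) (A i) (s i)" "is_strategy M (P i) (A i) (t i)"
    using worlds st i(1) unfolding free_choice_worlds_def by auto
  have "s i \<omega>\<^sub>0 \<in> A i"
    using strategies(1) \<omega>\<^sub>0(1) \<open>I \<subseteq> space M\<close> unfolding is_strategy_def by blast
  moreover have "\<forall>\<omega>\<in>I. s i \<omega> = s i \<omega>\<^sub>0" "\<forall>\<omega>\<in>I. t i \<omega> = t i \<omega>\<^sub>0"
    using strategy_constant_on_cell[OF partition(1) _ i(3)] strategies \<omega>\<^sub>0(1) by blast+
  ultimately show ?thesis using \<omega>\<^sub>0(2) by auto
qed

lemma BAY_imp_not_imperfect_info_player:
  assumes game: "game n M p A P" and worlds: "free_choice_worlds n M A P W"
    and bay: "BAY n p A P W \<psi>" and "i < n"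
  shows "\<not> imperfect_info_player n p P i"
proof
  assume "imperfect_info_player n p P i"
  then obtain I j J where I: "I \<in> P i" "measure (p i) I > 0" and j: "j < n" "j \<noteq> i"
    and J: "J \<in> P j" "0 < cond_prob (p i) J I" "cond_prob (p i) J I < 1"
    unfolding imperfect_info_player_def by blast
  have prob: "finite_measure (p i)" "sets (p i) = sets M"
    and partition: "fin_partition M (P i)" "fin_partition M (P j)"
    and "\<exists>x\<in>A j. \<exists>y\<in>A j. x \<noteq> y"
    using gameD[OF game] \<open>i < n\<close> j(1) by (auto intro: prob_space.finite_measure)
  then obtain x y where xy: "x \<in> A j" "y \<in> A j" "x \<noteq> y" by blast
  have sets: "I \<in> sets M" "J \<in> sets M" "J \<subseteq> space M"
    using partition I J unfolding fin_partition_def by auto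
  have pos_i: "measure (p i) (J \<inter> I) > 0" "measure (p i) (I - J) > 0"
    using cond_prob_strictly_between_imp_pos[OF prob(1)] prob(2) sets J by auto
  then have pos_JI: "measure (p j) (J \<inter> I) > 0"
    using game_measure_pos_iff[OF game _ \<open>i < n\<close> j(1)] sets by blast
  obtain s t where st: "s \<in> W" "t \<in> W" "\<forall>\<omega>\<in>space M. s j \<omega> = x"
    "\<forall>\<omega>\<in>space M. t j \<omega> = (if \<omega> \<in> J then x else y)"
    using free_choice_worlds_deviation_off_cell[OF worlds partition(2) j(1) J(1) xy(1,2)] .
  have same_j: "\<forall>\<omega>\<in>J. s j \<omega> = x" "\<forall>\<omega>\<in>J. t j \<omega> = x"
    using st(3,4) sets(3) by auto
  obtain a where a: "a \<in> A i" "\<forall>\<omega>\<in>I. s i \<omega> = a" "\<forall>\<omega>\<in>I. t i \<omega> = a"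
    using BAY_imp_same_action_on_overlapping_cell[OF game worlds bay st(1,2) j(1) J(1) xy(1)
        same_j \<open>i < n\<close> j(2)[symmetric] I(1) pos_JI] by blast
  have "AE \<omega> in p i. \<omega> \<in> I \<longrightarrow> s j \<omega> = t j \<omega>"
    by (rule BAY_same_action_imp_AE_eq[OF bay st(1,2) \<open>i < n\<close> I(1) a(1) I(2) a(2,3) j])
  moreover have "I - J \<in> sets (p i)" "measure (p i) (I - J) \<noteq> 0"
    using prob(2) sets pos_i(2) by auto
  ultimately have "\<exists>\<omega>\<in>I - J. s j \<omega> = t j \<omega>"
    by (rule AE_imp_ex_on_nonnull_subset[OF _ Diff_subset])
  then obtain \<omega> where "\<omega> \<in> I - J" "s j \<omega> = t j \<omega>" ..
  moreover have "\<omega> \<in> space M" using \<open>\<omega> \<in> I - J\<close> partition(1) I(1)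
    unfolding fin_partition_def by auto
  ultimately show False using st(3,4) xy(3) by auto
qed

theorem theorem2:
  fixes n :: nat and M :: "'a measure" and p :: "nat \<Rightarrow> 'a measure"
    and A :: "nat \<Rightarrow> real set" and P :: "nat \<Rightarrow> 'a set set"
    and \<psi> :: "nat \<Rightarrow> 'a set \<Rightarrow> real \<Rightarrow> nat \<Rightarrow> 'a \<Rightarrow> real"
    and W :: "(nat \<Rightarrow> 'a \<Rightarrow> real) set"
  assumes "game n M p A P"
    and "imperfect_info n p P"
    and "conjectures n M A P \<psi>"
    and "free_choice_worlds n M A P W"
  shows "\<not> BAY n p A P W \<psi>"
\<comment> \<open>The conjectures are never inspected: BAY alone already fails.\<close>
proof
  assume "BAY n p A P W \<psi>"
  moreover obtain i where "i < n" "imperfect_info_player n p P i"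
    using assms(2) unfolding imperfect_info_def by blast
  ultimately show False using BAY_imp_not_imperfect_info_player[OF assms(1,4)] by blast
qed

end
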